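(* Let $X\in\mathbb{R}^{d_1}$ and $Y\in\mathbb{R}^{d_2}$ be independent zero-mean random vectors that are sub-Gaussian with parameters $\sigma_1^2$ and $\sigma_2^2$, i.e. $\mathbb{E}e^{\langle a,X\rangle}\le e^{\sigma_1^2\|a\|^2/2}$ and $\mathbb{E}e^{\langle b,Y\rangle}\le e^{\sigma_2^2\|b\|^2/2}$ for all $a\in\mathbb{R}^{d_1}$, $b\in\mathbb{R}^{d_2}$. Let $A\in\mathbb{R}^{d_1\times d_2}$, $\sigma^2=\sigma_1\sigma_2\|A\|$ and $d=\min(d_1,d_2)$. Then for all $\lambda$ with $\lambda^2\sigma^4<1$, $$\mathbb{E}\big(e^{\lambda X^TAY}\big)\le\Big(\frac{1}{1-\lambda^2\sigma^4}\Big)^{d/2},$$ and for all $t>0$, $$\mathbb{P}\big(X^TAY/\sigma^2>\sqrt{4dt}+4t\big)\le\exp(-t).$$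
   Context: $\|A\|$ denotes the spectral norm of $A$. *)

theory Defs
  imports "HOL-Analysis.Analysis" "HOL-Probability.Probability"
begin

definition spec_norm :: "real^'m^'n \<Rightarrow> real" where
  "spec_norm A = onorm (\<lambda>v. A *v v)"

text \<open>The library's indep_var requires both variables to share a codomain type, so we
  state the textbook definition directly.\<close>
definition indep_rv :: "'w measure \<Rightarrow> ('w \<Rightarrow> 'a::topological_space) \<Rightarrow> ('w \<Rightarrow> 'b::topological_space) \<Rightarrow> bool" where
  "indep_rv M X Y \<longleftrightarrow>
     (\<forall>S \<in> sets borel. \<forall>T \<in> sets borel.
        measure M {\<omega> \<in> space M. X \<omega> \<in> S \<and> Y \<omega> \<in> T}
          = measure M {\<omega> \<in> space M. X \<omega> \<in> S} * measure M {\<omega> \<in> space M. Y \<omega> \<in> T})"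

end

theory Submission
  imports Defs
begin

text \<open>Conditionally on \<open>Y\<close>, the exponent \<open>l X\<^sup>T A Y\<close> is linear in \<open>X\<close>, so sub-Gaussianity of
  \<open>X\<close> bounds the conditional moment generating function by \<open>exp (c |Y|\<^sup>2)\<close> with
  \<open>c = \<sigma>1\<^sup>2 l\<^sup>2 \<parallel>A\<parallel>\<^sup>2 / 2\<close>. Gaussian decoupling linearises this exponent again:
  \<open>exp (c |y|\<^sup>2) = E exp \<langle>g, y\<rangle>\<close> for a centred Gaussian vector \<open>g\<close> with covariance \<open>2c I\<close>.
  Exchanging the expectations and using sub-Gaussianity of \<open>Y\<close> leaves \<open>E exp (\<sigma>2\<^sup>2 |g|\<^sup>2 / 2)\<close>,
  a product of one-dimensional Gaussian integrals equal to \<open>(1 - l\<^sup>2 \<sigma>\<^sup>4) powr (- n / 2)\<close>, where \<open>n\<close> is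
  the dimension of \<open>Y\<close>; transposing \<open>A\<close> swaps \<open>X\<close> and \<open>Y\<close> and gives the smaller dimension \<open>d\<close>.
  The tail bound is the Chernoff bound at \<open>l = \<surd>t / (\<sigma>\<^sup>2 (\<surd>t + \<surd>d))\<close>.\<close>

lemma nn_integral_density_normal_eq:
  assumes "s' > 0" "C \<ge> 0" and [measurable]: "f \<in> borel_measurable borel"
    and f_nonneg: "\<And>x. f x \<ge> 0"
    and square: "\<And>x. normal_density 0 s x * f x = C * normal_density m s' x"
  shows "(\<integral>\<^sup>+x. ennreal (f x) \<partial>density lborel (normal_density 0 s)) = ennreal C"
proof -
  have "(\<integral>\<^sup>+x. ennreal (f x) \<partial>density lborel (normal_density 0 s))
      = (\<integral>\<^sup>+x. ennreal (normal_density 0 s x) * ennreal (f x) \<partial>lborel)"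
    by (subst nn_integral_density) auto
  also have "\<dots> = (\<integral>\<^sup>+x. ennreal C * ennreal (normal_density m s' x) \<partial>lborel)"
  proof (rule nn_integral_cong)
    fix x
    have "ennreal (normal_density 0 s x) * ennreal (f x) = ennreal (normal_density 0 s x * f x)"
      using f_nonneg by (simp add: ennreal_mult)
    also have "\<dots> = ennreal C * ennreal (normal_density m s' x)"
      using \<open>C \<ge> 0\<close> by (simp add: square ennreal_mult)
    finally show "ennreal (normal_density 0 s x) * ennreal (f x) = ennreal C * ennreal (normal_density m s' x)" .
  qed
  also have "\<dots> = ennreal C * (\<integral>\<^sup>+x. ennreal (normal_density m s' x) \<partial>lborel)"
    by (rule nn_integral_cmult) simp
  also have "(\<integral>\<^sup>+x. ennreal (normal_density m s' x) \<partial>lborel) = 1"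
    using \<open>s' > 0\<close> by (subst nn_integral_eq_integral) auto
  finally show ?thesis by simp
qed

lemma normal_density_mult_exp:
  assumes "s > 0"
  shows "normal_density 0 s x * exp (y * x) = exp (s\<^sup>2 / 2 * y\<^sup>2) * normal_density (s\<^sup>2 * y) s x"
proof -
  have "-(x - 0)\<^sup>2 / (2 * s\<^sup>2) + y * x = s\<^sup>2 / 2 * y\<^sup>2 + -(x - s\<^sup>2 * y)\<^sup>2 / (2 * s\<^sup>2)"
    using assms by (simp add: field_simps power2_eq_square)
  then show ?thesis
    unfolding normal_density_def by (simp add: exp_add[symmetric] ac_simps)
qed

lemma nn_integral_normal_exp:
  assumes "s > 0"
  shows "(\<integral>\<^sup>+x. ennreal (exp (y * x)) \<partial>density lborel (normal_density 0 s))
       = ennreal (exp (s\<^sup>2 / 2 * y\<^sup>2))"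
  using assms by (intro nn_integral_density_normal_eq[OF _ _ _ _ normal_density_mult_exp]) auto

lemma normal_density_mult_exp_square:
  assumes "s > 0" and q: "2 * k * s\<^sup>2 < 1"
  shows "normal_density 0 s x * exp (k * x\<^sup>2)
       = (1 / sqrt (1 - 2 * k * s\<^sup>2)) * normal_density 0 (s / sqrt (1 - 2 * k * s\<^sup>2)) x"
proof -
  define r where "r = sqrt (1 - 2 * k * s\<^sup>2)"
  have r: "r > 0" "(s / r)\<^sup>2 = s\<^sup>2 / (1 - 2 * k * s\<^sup>2)"
    using q by (auto simp: r_def power_divide)
  have "-(x - 0)\<^sup>2 / (2 * s\<^sup>2) + k * x\<^sup>2 = -(x - 0)\<^sup>2 / (2 * (s / r)\<^sup>2)"
    using assms q unfolding r(2) by (simp add: field_simps)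
  moreover have "1 / sqrt (2 * pi * s\<^sup>2) = (1 / r) * (1 / sqrt (2 * pi * (s / r)\<^sup>2))"
    using assms r by (simp add: power_divide real_sqrt_divide real_sqrt_mult field_simps)
  ultimately show ?thesis
    unfolding normal_density_def r_def[symmetric] by (simp add: exp_add[symmetric] ac_simps)
qed

lemma nn_integral_normal_exp_square:
  assumes "s > 0" "2 * k * s\<^sup>2 < 1"
  shows "(\<integral>\<^sup>+x. ennreal (exp (k * x\<^sup>2)) \<partial>density lborel (normal_density 0 s))
       = ennreal (1 / sqrt (1 - 2 * k * s\<^sup>2))"
  using assms
  by (intro nn_integral_density_normal_eq[OF _ _ _ _ normal_density_mult_exp_square]) auto

lemma borel_measurable_vec_nth[measurable]: "(\<lambda>x::real^'n. x $ i) \<in> borel_measurable borel"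
  by (intro borel_measurable_continuous_onI continuous_intros)

lemma continuous_on_matrix_vector_mult[continuous_intros]:
  "continuous_on S f \<Longrightarrow> continuous_on S (\<lambda>x. (A::real^'n^'m) *v f x)"
  using continuous_on_compose2[OF matrix_vector_mult_linear_continuous_on] by blast

lemma borel_measurable_matrix_vector_mult[measurable]:
  "(\<lambda>x. (A::real^'n^'m) *v x) \<in> borel_measurable borel"
  by (intro borel_measurable_continuous_onI matrix_vector_mult_linear_continuous_on)

lemma indep_rv_commute: "indep_rv M X Y \<Longrightarrow> indep_rv M Y X"
  unfolding indep_rv_def by (simp add: conj_commute mult.commute)

lemma pair_measure_distr_indep_rv:
  fixes X :: "'w \<Rightarrow> 'a::second_countable_topology" and Y :: "'w \<Rightarrow> 'b::second_countable_topology"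
  assumes "prob_space M" and [measurable]: "X \<in> borel_measurable M" "Y \<in> borel_measurable M"
    and indep: "indep_rv M X Y"
  shows "distr M borel X \<Otimes>\<^sub>M distr M borel Y = distr M borel (\<lambda>\<omega>. (X \<omega>, Y \<omega>))"
proof -
  interpret prob_space M by fact
  interpret PX: prob_space "distr M borel X" by (rule prob_space_distr) simp
  interpret PY: prob_space "distr M borel Y" by (rule prob_space_distr) simp
  show ?thesis
  proof (rule pair_measure_eqI)
    show "sigma_finite_measure (distr M borel X)" "sigma_finite_measure (distr M borel Y)"
      by unfold_locales
    show "sets (distr M borel X \<Otimes>\<^sub>M distr M borel Y) = sets (distr M borel (\<lambda>\<omega>. (X \<omega>, Y \<omega>)))"
      by (simp, subst borel_prod, rule refl)
  next
    fix S T assume "S \<in> sets (distr M borel X)" "T \<in> sets (distr M borel Y)"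
    then have [measurable]: "S \<in> sets borel" "T \<in> sets borel" by auto
    have "emeasure (distr M borel (\<lambda>\<omega>. (X \<omega>, Y \<omega>))) (S \<times> T)
        = emeasure M {\<omega> \<in> space M. X \<omega> \<in> S \<and> Y \<omega> \<in> T}"
      by (subst emeasure_distr) (auto simp: borel_prod[symmetric] intro!: arg_cong[where f = "emeasure M"])
    also have "\<dots> = emeasure M {\<omega> \<in> space M. X \<omega> \<in> S} * emeasure M {\<omega> \<in> space M. Y \<omega> \<in> T}"
      using indep unfolding indep_rv_def by (simp add: emeasure_eq_measure ennreal_mult)
    also have "\<dots> = emeasure (distr M borel X) S * emeasure (distr M borel Y) T"
      by (simp add: emeasure_distr vimage_def Int_def conj_commute)
    finally show "emeasure (distr M borel X) S * emeasure (distr M borel Y) T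
        = emeasure (distr M borel (\<lambda>\<omega>. (X \<omega>, Y \<omega>))) (S \<times> T)" by simp
  qed
qed

lemma nn_integral_indep_rv:
  fixes X :: "'w \<Rightarrow> 'a::second_countable_topology" and Y :: "'w \<Rightarrow> 'b::second_countable_topology"
  assumes "prob_space M" and [measurable]: "X \<in> borel_measurable M" "Y \<in> borel_measurable M"
    and "indep_rv M X Y" and [measurable]: "case_prod f \<in> borel_measurable borel"
  shows "(\<integral>\<^sup>+\<omega>. f (X \<omega>) (Y \<omega>) \<partial>M) = (\<integral>\<^sup>+y. \<integral>\<^sup>+x. f x y \<partial>distr M borel X \<partial>distr M borel Y)"
proof -
  interpret PX: prob_space "distr M borel X" by (rule prob_space.prob_space_distr) (use assms in simp_all)
  interpret PY: prob_space "distr M borel Y" by (rule prob_space.prob_space_distr) (use assms in simp_all)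
  interpret pair_sigma_finite "distr M borel X" "distr M borel Y" ..
  have "(\<integral>\<^sup>+\<omega>. f (X \<omega>) (Y \<omega>) \<partial>M) = (\<integral>\<^sup>+z. case_prod f z \<partial>distr M borel (\<lambda>\<omega>. (X \<omega>, Y \<omega>)))"
    by (subst nn_integral_distr) (auto simp: borel_prod)
  also have "\<dots> = (\<integral>\<^sup>+z. case_prod f z \<partial>(distr M borel X \<Otimes>\<^sub>M distr M borel Y))"
    by (simp add: pair_measure_distr_indep_rv[OF assms(1-4)])
  also have "\<dots> = (\<integral>\<^sup>+y. \<integral>\<^sup>+x. f x y \<partial>distr M borel X \<partial>distr M borel Y)"
  proof -
    have "sets (distr M borel X \<Otimes>\<^sub>M distr M borel Y) = sets borel"
      by (simp, subst borel_prod, rule refl)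
    then have "case_prod f \<in> borel_measurable (distr M borel X \<Otimes>\<^sub>M distr M borel Y)"
      using assms(5) measurable_cong_sets by blast
    from nn_integral_snd[OF this] show ?thesis by simp
  qed
  finally show ?thesis .
qed

lemma norm_matrix_vector_le_spec_norm: "norm (A *v x) \<le> spec_norm A * norm x"
  unfolding spec_norm_def by (rule onorm) simp

lemma spec_norm_nonneg: "0 \<le> spec_norm A"
  unfolding spec_norm_def by (rule onorm_pos_le) simp

lemma spec_norm_transpose_le: "spec_norm (transpose A) \<le> spec_norm A"
  unfolding spec_norm_def[of "transpose A"]
proof (rule onorm_le)
  fix x
  define v where "v = transpose A *v x"
  have "(norm v)\<^sup>2 = x \<bullet> (A *v v)"
    unfolding v_def power2_norm_eq_inner by (metis dot_lmul_matrix transpose_matrix_vector)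
  also have "\<dots> \<le> norm x * (spec_norm A * norm v)"
    by (intro order.trans[OF norm_cauchy_schwarz] mult_left_mono norm_matrix_vector_le_spec_norm) simp
  finally have "norm v * norm v \<le> norm v * (spec_norm A * norm x)"
    by (simp add: power2_eq_square ac_simps)
  then show "norm v \<le> spec_norm A * norm x"
    using spec_norm_nonneg[of A] by (cases "norm v = 0") auto
qed

lemma spec_norm_transpose: "spec_norm (transpose A) = spec_norm A"
  using spec_norm_transpose_le[of A] spec_norm_transpose_le[of "transpose A"] by simp

lemma power2_norm_vec: "(norm x)\<^sup>2 = (\<Sum>i\<in>UNIV. (x $ i)\<^sup>2)"
  by (simp add: norm_vec_def L2_set_def sum_nonneg)

definition subgaussian :: "'w measure \<Rightarrow> ('w \<Rightarrow> 'a::real_inner) \<Rightarrow> real \<Rightarrow> bool" where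
  "subgaussian M X \<sigma> \<longleftrightarrow>
     (\<forall>a. (\<integral>\<^sup>+\<omega>. ennreal (exp (a \<bullet> X \<omega>)) \<partial>M) \<le> ennreal (exp (\<sigma>\<^sup>2 * (norm a)\<^sup>2 / 2)))"

lemma exp_norm_sq_eq_nn_integral_gaussian:
  fixes y :: "real^'n"
  assumes "s > 0"
  shows "ennreal (exp (s\<^sup>2 / 2 * (norm y)\<^sup>2))
       = (\<integral>\<^sup>+g. ennreal (exp (\<Sum>i\<in>UNIV. y $ i * g i))
            \<partial>Pi\<^sub>M UNIV (\<lambda>_. density lborel (normal_density 0 s)))"
proof -
  interpret product_prob_space "\<lambda>_::'n. density lborel (normal_density 0 s)" UNIV
    by (intro product_prob_spaceI prob_space_normal_density assms)
  have "ennreal (exp (s\<^sup>2 / 2 * (norm y)\<^sup>2)) = (\<Prod>i\<in>UNIV. ennreal (exp (s\<^sup>2 / 2 * (y $ i)\<^sup>2)))"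
    by (simp add: power2_norm_vec sum_distrib_left exp_sum prod_ennreal)
  also have "\<dots> = (\<Prod>i\<in>UNIV. \<integral>\<^sup>+t. ennreal (exp (y $ i * t)) \<partial>density lborel (normal_density 0 s))"
    using nn_integral_normal_exp[OF assms] by simp
  also have "\<dots> = (\<integral>\<^sup>+g. (\<Prod>i\<in>UNIV. ennreal (exp (y $ i * g i)))
                     \<partial>Pi\<^sub>M UNIV (\<lambda>_. density lborel (normal_density 0 s)))"
    by (rule product_nn_integral_prod[symmetric]) auto
  also have "\<dots> = (\<integral>\<^sup>+g. ennreal (exp (\<Sum>i\<in>UNIV. y $ i * g i))
                     \<partial>Pi\<^sub>M UNIV (\<lambda>_. density lborel (normal_density 0 s)))"
    by (simp add: prod_ennreal exp_sum)
  finally show ?thesis .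
qed

lemma nn_integral_gaussian_exp_norm_sq:
  assumes "s > 0" and q: "2 * k * s\<^sup>2 < 1"
  shows "(\<integral>\<^sup>+g. ennreal (exp (k * (\<Sum>i\<in>UNIV. (g i)\<^sup>2)))
            \<partial>Pi\<^sub>M (UNIV :: 'n::finite set) (\<lambda>_. density lborel (normal_density 0 s)))
       = ennreal ((1 / (1 - 2 * k * s\<^sup>2)) powr (real CARD('n) / 2))"
proof -
  interpret product_prob_space "\<lambda>_::'n. density lborel (normal_density 0 s)" UNIV
    by (intro product_prob_spaceI prob_space_normal_density assms)
  have "(\<integral>\<^sup>+g. ennreal (exp (k * (\<Sum>i\<in>UNIV. (g i)\<^sup>2)))
            \<partial>Pi\<^sub>M (UNIV :: 'n set) (\<lambda>_. density lborel (normal_density 0 s)))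
      = (\<integral>\<^sup>+g. (\<Prod>i\<in>UNIV. ennreal (exp (k * (g i)\<^sup>2)))
            \<partial>Pi\<^sub>M (UNIV :: 'n set) (\<lambda>_. density lborel (normal_density 0 s)))"
    by (simp add: prod_ennreal exp_sum sum_distrib_left)
  also have "\<dots> = (\<Prod>i\<in>(UNIV :: 'n set). ennreal (1 / sqrt (1 - 2 * k * s\<^sup>2)))"
    by (subst product_nn_integral_prod) (use nn_integral_normal_exp_square[OF assms] in auto)
  also have "\<dots> = ennreal ((1 / sqrt (1 - 2 * k * s\<^sup>2)) ^ CARD('n))"
    using q by (simp add: ennreal_power)
  also have "(1 / sqrt (1 - 2 * k * s\<^sup>2)) ^ CARD('n) = (1 / (1 - 2 * k * s\<^sup>2)) powr (real CARD('n) / 2)"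
  proof -
    have "1 / sqrt (1 - 2 * k * s\<^sup>2) = (1 / (1 - 2 * k * s\<^sup>2)) powr (1 / 2)"
      using q by (simp add: powr_half_sqrt real_sqrt_divide)
    then show ?thesis
      using q by (simp add: powr_realpow[symmetric] powr_powr)
  qed
  finally show ?thesis .
qed

lemma subgaussian_nn_integral_exp_norm_sq:
  fixes Y :: "'w \<Rightarrow> real^'n"
  assumes "prob_space M" and [measurable]: "Y \<in> borel_measurable M" and subY: "subgaussian M Y \<sigma>"
    and c: "c \<ge> 0" "2 * c * \<sigma>\<^sup>2 < 1"
  shows "(\<integral>\<^sup>+\<omega>. ennreal (exp (c * (norm (Y \<omega>))\<^sup>2)) \<partial>M)
       \<le> ennreal ((1 / (1 - 2 * c * \<sigma>\<^sup>2)) powr (real CARD('n) / 2))"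
proof (cases "c = 0")
  case True
  have "1 \<le> (1 / (1 - 2 * c * \<sigma>\<^sup>2)) powr (real CARD('n) / 2)"
    using True by simp
  then show ?thesis
    using True prob_space.emeasure_space_1[OF assms(1)] by simp
next
  case False
  interpret prob_space M by fact
  define s where "s = sqrt (2 * c)"
  have s: "s > 0" "s\<^sup>2 / 2 = c" using c False by (auto simp: s_def)
  define G where "G = Pi\<^sub>M (UNIV :: 'n set) (\<lambda>_. density lborel (normal_density 0 s))"
  interpret G: prob_space G
    unfolding G_def by (intro prob_space_PiM prob_space_normal_density s)
  interpret pair_sigma_finite M G ..
  have sets_G: "sets G = sets (Pi\<^sub>M (UNIV :: 'n set) (\<lambda>_. borel))"
    unfolding G_def by (intro sets_PiM_cong) auto
  have "(\<integral>\<^sup>+\<omega>. ennreal (exp (c * (norm (Y \<omega>))\<^sup>2)) \<partial>M)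
      = (\<integral>\<^sup>+\<omega>. \<integral>\<^sup>+g. ennreal (exp (\<Sum>i\<in>UNIV. Y \<omega> $ i * g i)) \<partial>G \<partial>M)"
    unfolding G_def by (simp flip: s(2) exp_norm_sq_eq_nn_integral_gaussian[OF s(1)])
  also have "\<dots> = (\<integral>\<^sup>+g. \<integral>\<^sup>+\<omega>. ennreal (exp ((\<chi> i. g i) \<bullet> Y \<omega>)) \<partial>M \<partial>G)"
    by (subst Fubini') (simp_all add: measurable_cong_sets[OF sets_pair_measure_cong[OF refl sets_G]]
        inner_vec_def mult.commute)
  also have "\<dots> \<le> (\<integral>\<^sup>+g. ennreal (exp (\<sigma>\<^sup>2 / 2 * (\<Sum>i\<in>UNIV. (g i)\<^sup>2))) \<partial>G)"
  proof (rule nn_integral_mono)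
    fix g :: "'n \<Rightarrow> real"
    show "(\<integral>\<^sup>+\<omega>. ennreal (exp ((\<chi> i. g i) \<bullet> Y \<omega>)) \<partial>M)
        \<le> ennreal (exp (\<sigma>\<^sup>2 / 2 * (\<Sum>i\<in>UNIV. (g i)\<^sup>2)))"
      using subY[unfolded subgaussian_def, rule_format, of "\<chi> i. g i"] by (simp add: power2_norm_vec)
  qed
  also have "\<dots> = ennreal ((1 / (1 - 2 * c * \<sigma>\<^sup>2)) powr (real CARD('n) / 2))"
  proof -
    have k: "2 * (\<sigma>\<^sup>2 / 2) * s\<^sup>2 = 2 * c * \<sigma>\<^sup>2"
      unfolding s(2)[symmetric] by (simp add: field_simps)
    show ?thesis
      unfolding G_def nn_integral_gaussian_exp_norm_sq[OF s(1) c(2)[folded k]] k ..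
  qed
  finally show ?thesis .
qed

lemma subgaussian_nn_integral_exp_inner_matrix_vector:
  fixes X :: "'w \<Rightarrow> real^'m" and A :: "real^'n^'m"
  assumes [measurable]: "X \<in> borel_measurable M" and "subgaussian M X \<sigma>"
  shows "(\<integral>\<^sup>+x. ennreal (exp (l * (x \<bullet> (A *v y)))) \<partial>distr M borel X)
       \<le> ennreal (exp (\<sigma>\<^sup>2 * l\<^sup>2 * (spec_norm A)\<^sup>2 / 2 * (norm y)\<^sup>2))"
proof -
  have "(\<integral>\<^sup>+x. ennreal (exp (l * (x \<bullet> (A *v y)))) \<partial>distr M borel X)
      = (\<integral>\<^sup>+\<omega>. ennreal (exp ((l *\<^sub>R (A *v y)) \<bullet> X \<omega>)) \<partial>M)"
    by (subst nn_integral_distr) (auto simp: inner_commute)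
  also have "\<dots> \<le> ennreal (exp (\<sigma>\<^sup>2 * (norm (l *\<^sub>R (A *v y)))\<^sup>2 / 2))"
    using assms(2) unfolding subgaussian_def by blast
  also have "\<dots> \<le> ennreal (exp (\<sigma>\<^sup>2 * l\<^sup>2 * (spec_norm A)\<^sup>2 / 2 * (norm y)\<^sup>2))"
  proof -
    have "norm (l *\<^sub>R (A *v y)) \<le> \<bar>l\<bar> * (spec_norm A * norm y)"
      by (simp add: mult_left_mono norm_matrix_vector_le_spec_norm)
    then have "(norm (l *\<^sub>R (A *v y)))\<^sup>2 \<le> l\<^sup>2 * (spec_norm A)\<^sup>2 * (norm y)\<^sup>2"
      using power_mono[of _ _ 2] by (fastforce simp: power_mult_distrib)
    then show ?thesis
      by (intro ennreal_leI) (simp add: mult_left_mono divide_right_mono mult.assoc)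
  qed
  finally show ?thesis .
qed

lemma subgaussian_bilinear_nn_integral_exp:
  fixes X :: "'w \<Rightarrow> real^'m" and Y :: "'w \<Rightarrow> real^'n" and A :: "real^'n^'m"
  assumes "prob_space M" and [measurable]: "X \<in> borel_measurable M" "Y \<in> borel_measurable M"
    and "indep_rv M X Y" and subX: "subgaussian M X \<sigma>1" and subY: "subgaussian M Y \<sigma>2"
    and l: "l\<^sup>2 * (\<sigma>1 * \<sigma>2 * spec_norm A)\<^sup>2 < 1"
  shows "(\<integral>\<^sup>+\<omega>. ennreal (exp (l * (X \<omega> \<bullet> (A *v Y \<omega>)))) \<partial>M)
       \<le> ennreal ((1 / (1 - l\<^sup>2 * (\<sigma>1 * \<sigma>2 * spec_norm A)\<^sup>2)) powr (real CARD('n) / 2))"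
proof -
  define c where "c = \<sigma>1\<^sup>2 * l\<^sup>2 * (spec_norm A)\<^sup>2 / 2"
  have c: "c \<ge> 0" "2 * c * \<sigma>2\<^sup>2 = l\<^sup>2 * (\<sigma>1 * \<sigma>2 * spec_norm A)\<^sup>2"
    by (simp_all add: c_def power_mult_distrib)
  have "(\<integral>\<^sup>+\<omega>. ennreal (exp (l * (X \<omega> \<bullet> (A *v Y \<omega>)))) \<partial>M)
      = (\<integral>\<^sup>+y. \<integral>\<^sup>+x. ennreal (exp (l * (x \<bullet> (A *v y)))) \<partial>distr M borel X \<partial>distr M borel Y)"
    by (rule nn_integral_indep_rv[OF assms(1-4)])
       (auto simp: case_prod_beta' intro!: borel_measurable_continuous_onI continuous_intros)
  also have "\<dots> \<le> (\<integral>\<^sup>+y. ennreal (exp (c * (norm y)\<^sup>2)) \<partial>distr M borel Y)"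
    unfolding c_def by (intro nn_integral_mono subgaussian_nn_integral_exp_inner_matrix_vector subX) simp
  also have "\<dots> = (\<integral>\<^sup>+\<omega>. ennreal (exp (c * (norm (Y \<omega>))\<^sup>2)) \<partial>M)"
    by (subst nn_integral_distr) auto
  also have "\<dots> \<le> ennreal ((1 / (1 - l\<^sup>2 * (\<sigma>1 * \<sigma>2 * spec_norm A)\<^sup>2)) powr (real CARD('n) / 2))"
    using subgaussian_nn_integral_exp_norm_sq[OF assms(1,3) subY c(1)] c(2) l by simp
  finally show ?thesis .
qed

lemma subgaussian_bilinear_nn_integral_exp_min:
  fixes X :: "'w \<Rightarrow> real^'m" and Y :: "'w \<Rightarrow> real^'n" and A :: "real^'n^'m"
  assumes "prob_space M" and "X \<in> borel_measurable M" "Y \<in> borel_measurable M"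
    and "indep_rv M X Y" and "subgaussian M X \<sigma>1" and "subgaussian M Y \<sigma>2"
    and "l\<^sup>2 * (\<sigma>1 * \<sigma>2 * spec_norm A)\<^sup>2 < 1"
  shows "(\<integral>\<^sup>+\<omega>. ennreal (exp (l * (X \<omega> \<bullet> (A *v Y \<omega>)))) \<partial>M)
       \<le> ennreal ((1 / (1 - l\<^sup>2 * (\<sigma>1 * \<sigma>2 * spec_norm A)\<^sup>2))
                   powr (real (min CARD('m) CARD('n)) / 2))"
proof (cases "CARD('n) \<le> CARD('m)")
  case True
  then show ?thesis
    using subgaussian_bilinear_nn_integral_exp[OF assms] by (simp add: min_absorb2)
next
  case False
  have "X \<omega> \<bullet> (A *v Y \<omega>) = Y \<omega> \<bullet> (transpose A *v X \<omega>)" for \<omega>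
    by (metis dot_lmul_matrix transpose_matrix_vector inner_commute)
  then show ?thesis
    using subgaussian_bilinear_nn_integral_exp[OF assms(1,3,2) indep_rv_commute[OF assms(4)] assms(6,5),
        where A = "transpose A"] assms(7) False
    by (simp add: spec_norm_transpose min_absorb1 ac_simps)
qed

lemma chernoff_exponent_le:
  fixes t d :: real
  assumes "t > 0" and "d > 0"
  defines "\<mu> \<equiv> sqrt t / (sqrt t + sqrt d)"
  shows "(1 / (1 - \<mu>\<^sup>2)) powr (d / 2) * exp (- (\<mu> * (sqrt (4 * d * t) + 4 * t))) \<le> exp (- t)"
proof -
  define a b where "a = sqrt t" and "b = sqrt d"
  have a: "a > 0" and b: "b > 0" using assms by (auto simp: a_def b_def)
  have t: "t = a\<^sup>2" and d: "d = b\<^sup>2" using assms by (auto simp: a_def b_def)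
  have \<mu>: "\<mu> = a / (a + b)" by (simp add: \<mu>_def a_def b_def)
  have "1 - \<mu>\<^sup>2 = ((a + b)\<^sup>2 - a\<^sup>2) / (a + b)\<^sup>2"
    using a b by (simp add: \<mu> power_divide diff_divide_distrib)
  also have "(a + b)\<^sup>2 - a\<^sup>2 = b * (2 * a + b)"
    by (simp add: power2_eq_square algebra_simps)
  finally have "1 / (1 - \<mu>\<^sup>2) = (a + b)\<^sup>2 / (b * (2 * a + b))"
    by simp
  also have "(a + b)\<^sup>2 = b * (2 * a + b) + a\<^sup>2"
    by (simp add: power2_eq_square algebra_simps)
  also have "(b * (2 * a + b) + a\<^sup>2) / (b * (2 * a + b)) = 1 + a\<^sup>2 / (b * (2 * a + b))"
    using a b by (simp add: add_divide_distrib)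
  finally have "1 / (1 - \<mu>\<^sup>2) = 1 + a\<^sup>2 / (b * (2 * a + b))" .
  then have "(1 / (1 - \<mu>\<^sup>2)) powr (d / 2) \<le> exp (a\<^sup>2 / (b * (2 * a + b))) powr (d / 2)"
    using a b assms(2) by (intro powr_mono2) (auto simp: add.commute exp_ge_add_one_self)
  also have "\<dots> = exp (a\<^sup>2 * b / (2 * (2 * a + b)))"
    using a b unfolding d by (simp add: exp_powr_real power2_eq_square divide_simps)
  also have "\<dots> \<le> exp (a\<^sup>2 / 2)"
    using a b by (simp add: divide_simps mult_left_mono)
  finally have mgf_part: "(1 / (1 - \<mu>\<^sup>2)) powr (d / 2) \<le> exp (a\<^sup>2 / 2)" .
  have "sqrt (4 * d * t) = 2 * a * b"
    by (simp add: a_def b_def real_sqrt_mult)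
  then have "\<mu> * (sqrt (4 * d * t) + 4 * t) = 2 * a\<^sup>2 * ((b + 2 * a) / (a + b))"
    using a b by (simp add: \<mu> t field_simps power2_eq_square)
  moreover have "1 \<le> (b + 2 * a) / (a + b)"
    using a b by simp
  ultimately have exponent_part: "2 * a\<^sup>2 \<le> \<mu> * (sqrt (4 * d * t) + 4 * t)"
    using mult_left_mono[of 1 "(b + 2 * a) / (a + b)" "2 * a\<^sup>2"] by simp
  have "(1 / (1 - \<mu>\<^sup>2)) powr (d / 2) * exp (- (\<mu> * (sqrt (4 * d * t) + 4 * t)))
      \<le> exp (a\<^sup>2 / 2) * exp (- (2 * a\<^sup>2))"
    using mgf_part exponent_part by (intro mult_mono) auto
  also have "\<dots> \<le> exp (- t)"
    by (simp add: t flip: exp_add)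
  finally show ?thesis .
qed

lemma measure_gt_le_of_mgf_bound:
  fixes W :: "'w \<Rightarrow> real" and d t :: real
  assumes [measurable]: "W \<in> borel_measurable M" and "t > 0" "d > 0"
    and mgf: "\<And>\<mu>. 0 < \<mu> \<Longrightarrow> \<mu> < 1 \<Longrightarrow>
               (\<integral>\<^sup>+\<omega>. ennreal (exp (\<mu> * W \<omega>)) \<partial>M) \<le> ennreal ((1 / (1 - \<mu>\<^sup>2)) powr (d / 2))"
  shows "measure M {\<omega> \<in> space M. W \<omega> > sqrt (4 * d * t) + 4 * t} \<le> exp (- t)"
proof -
  define \<mu> u where "\<mu> = sqrt t / (sqrt t + sqrt d)" and "u = sqrt (4 * d * t) + 4 * t"
  have "0 < sqrt t" "0 < sqrt d" using assms(2,3) by auto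
  then have \<mu>: "0 < \<mu>" "\<mu> < 1"
    unfolding \<mu>_def by (auto intro: divide_pos_pos simp only: divide_less_eq_1_pos)
  have "emeasure M {\<omega> \<in> space M. W \<omega> > u} \<le> emeasure M {\<omega> \<in> space M. W \<omega> \<ge> u}"
    by (intro emeasure_mono) auto
  also have "\<dots> \<le> ennreal (exp (- \<mu> * u)) * (\<integral>\<^sup>+\<omega>. ennreal (exp (\<mu> * W \<omega>)) * indicator (space M) \<omega> \<partial>M)"
    using \<mu> by (intro Chernoff_ineq_nn_integral_ge) auto
  also have "(\<integral>\<^sup>+\<omega>. ennreal (exp (\<mu> * W \<omega>)) * indicator (space M) \<omega> \<partial>M)
           = (\<integral>\<^sup>+\<omega>. ennreal (exp (\<mu> * W \<omega>)) \<partial>M)"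
    by (intro nn_integral_cong) simp
  also have "ennreal (exp (- \<mu> * u)) * \<dots> \<le> ennreal (exp (- \<mu> * u) * (1 / (1 - \<mu>\<^sup>2)) powr (d / 2))"
    using mgf[OF \<mu>] by (simp add: ennreal_mult mult_left_mono)
  also have "\<dots> \<le> ennreal (exp (- t))"
    using chernoff_exponent_le[OF assms(2,3)] by (simp add: \<mu>_def u_def mult.commute)
  finally show ?thesis
    unfolding u_def measure_def by (intro enn2real_leI) auto
qed

lemma measure_gt_div_le_of_mgf_bound:
  fixes W :: "'w \<Rightarrow> real" and \<sigma> d t :: real
  assumes [measurable]: "W \<in> borel_measurable M" and "\<sigma> \<ge> 0" "t > 0" "d > 0"
    and mgf: "\<And>l. l\<^sup>2 * \<sigma>\<^sup>2 < 1 \<Longrightarrow>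
               (\<integral>\<^sup>+\<omega>. ennreal (exp (l * W \<omega>)) \<partial>M) \<le> ennreal ((1 / (1 - l\<^sup>2 * \<sigma>\<^sup>2)) powr (d / 2))"
  shows "measure M {\<omega> \<in> space M. W \<omega> / \<sigma> > sqrt (4 * d * t) + 4 * t} \<le> exp (- t)"
proof (cases "\<sigma> = 0")
  case True
  have "0 < sqrt (4 * d * t) + 4 * t"
    using assms(3,4) by (intro add_nonneg_pos) auto
  \<comment> \<open>\<open>W \<omega> / 0 = 0\<close>, so the event is empty\<close>
  then have "{\<omega> \<in> space M. W \<omega> / \<sigma> > sqrt (4 * d * t) + 4 * t} = {}"
    using True by auto
  then show ?thesis by (metis measure_empty exp_ge_zero)
next
  case False
  with \<open>\<sigma> \<ge> 0\<close> have "\<sigma> > 0" by simp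
  show ?thesis
  proof (rule measure_gt_le_of_mgf_bound)
    show "(\<integral>\<^sup>+\<omega>. ennreal (exp (\<mu> * (W \<omega> / \<sigma>))) \<partial>M) \<le> ennreal ((1 / (1 - \<mu>\<^sup>2)) powr (d / 2))"
      if "0 < \<mu>" "\<mu> < 1" for \<mu>
      using mgf[of "\<mu> / \<sigma>"] that \<open>\<sigma> > 0\<close> by (simp add: power_divide abs_square_less_1)
  qed (use assms(3,4) in auto)
qed

theorem lemma4:
  fixes M :: "'w measure"
    and X :: "'w \<Rightarrow> real^'d1" and Y :: "'w \<Rightarrow> real^'d2"
    and A :: "real^'d2^'d1"
    and \<sigma>1 \<sigma>2 :: real
  assumes "prob_space M"
    and "X \<in> borel_measurable M" and "Y \<in> borel_measurable M"
    and "indep_rv M X Y"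
    and "integrable M X" and "integral\<^sup>L M X = 0"
    and "integrable M Y" and "integral\<^sup>L M Y = 0"
    and "\<sigma>1 \<ge> 0" and "\<sigma>2 \<ge> 0"
    and "\<And>a. (\<integral>\<^sup>+ \<omega>. ennreal (exp (a \<bullet> X \<omega>)) \<partial>M) \<le> ennreal (exp (\<sigma>1\<^sup>2 * (norm a)\<^sup>2 / 2))"
    and "\<And>b. (\<integral>\<^sup>+ \<omega>. ennreal (exp (b \<bullet> Y \<omega>)) \<partial>M) \<le> ennreal (exp (\<sigma>2\<^sup>2 * (norm b)\<^sup>2 / 2))"
  defines "\<sigma>sq \<equiv> \<sigma>1 * \<sigma>2 * spec_norm A"
    and "d \<equiv> min CARD('d1) CARD('d2)"
  shows "(\<forall>l::real. l\<^sup>2 * \<sigma>sq\<^sup>2 < 1 \<longrightarrow>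
           (\<integral>\<^sup>+ \<omega>. ennreal (exp (l * (X \<omega> \<bullet> (A *v Y \<omega>)))) \<partial>M)
             \<le> ennreal ((1 / (1 - l\<^sup>2 * \<sigma>sq\<^sup>2)) powr (real d / 2)))
       \<and> (\<forall>t::real. t > 0 \<longrightarrow>
           measure M {\<omega> \<in> space M. X \<omega> \<bullet> (A *v Y \<omega>) / \<sigma>sq > sqrt (4 * real d * t) + 4 * t}
             \<le> exp (- t))"
proof -
  have subX: "subgaussian M X \<sigma>1" and subY: "subgaussian M Y \<sigma>2"
    using assms(11,12) unfolding subgaussian_def by blast+
  have mgf: "(\<integral>\<^sup>+ \<omega>. ennreal (exp (l * (X \<omega> \<bullet> (A *v Y \<omega>)))) \<partial>M)
      \<le> ennreal ((1 / (1 - l\<^sup>2 * \<sigma>sq\<^sup>2)) powr (real d / 2))" if "l\<^sup>2 * \<sigma>sq\<^sup>2 < 1" for l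
    using subgaussian_bilinear_nn_integral_exp_min[OF assms(1-4) subX subY] that
    unfolding \<sigma>sq_def d_def by blast
  moreover have "measure M {\<omega> \<in> space M. X \<omega> \<bullet> (A *v Y \<omega>) / \<sigma>sq > sqrt (4 * real d * t) + 4 * t}
      \<le> exp (- t)" if "t > 0" for t
  proof (rule measure_gt_div_le_of_mgf_bound)
    show "(\<lambda>\<omega>. X \<omega> \<bullet> (A *v Y \<omega>)) \<in> borel_measurable M"
      using assms(2,3) by measurable
    show "\<sigma>sq \<ge> 0"
      unfolding \<sigma>sq_def by (intro mult_nonneg_nonneg assms(9,10) spec_norm_nonneg)
  qed (use mgf \<open>t > 0\<close> in \<open>auto simp: d_def\<close>)
  ultimately show ?thesis by blast
qed

end
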